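(* Let $k\ge 1$ and $1\le k^*\le k$ be integers, and run the Reduce-By-Median-Counter algorithm (defined in the context) with parameters $k,k^*$ on a weighted stream $(i_1,\Delta_1),(i_2,\Delta_2),\dots$. For each $n\ge 0$ let $f_{i,n}=\sum_{t\le n: i_t=i}\Delta_t$, let $\hat f_{i,n}$ be the output of Estimate$(i)$ after the first $n$ updates are processed, let $E_n=\max_{i\in[m]}(f_{i,n}-\hat f_{i,n})$, let $N_n=\sum_{t=1}^n\Delta_t$, and let $C_n=\sum_{j\in T}c(j)$ be the sum of the counters after the first $n$ updates. Then for every $n\ge 0$, $$E_n\le \frac{N_n-C_n}{k^*}.$$
   Context: A weighted stream over the universe $[m]=\{1,\dots,m\}$ is a sequence of updates $(i_t,\Delta_t)$ with $i_t\in[m]$ and real weights $\Delta_t>0$. The Reduce-By-Median-Counter algorithm with integer parameters $k\ge 1$ and $1\le k^*\le k$ maintains a set $T\subseteq[m]$ of at most $k$ items, each $j\in T$ carrying a nonnegative real counter $c(j)$; initially $T=\emptyset$. Update$(i,\Delta)$: if $i\in T$, set $c(i)\gets c(i)+\Delta$; else if $|T|<k$, add $i$ to $T$ with $c(i)=\Delta$; else call DecrementCounters(), and afterwards, if $\Delta\ge c_{k^*}$, add $i$ to $T$ with $c(i)=\Delta-c_{k^*}$. DecrementCounters(): let $c_{k^*}$ be the $k^*$-th largest value, counting multiplicity, of the multiset $\{c(j): j\in T\}$; for every $j\in T$ set $c(j)\gets c(j)-c_{k^*}$, and remove $j$ from $T$ if now $c(j)\le 0$. Estimate$(i)$ returns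 $c(i)$ if $i\in T$ and $0$ otherwise. *)

theory Defs
  imports Complex_Main "HOL-Library.Multiset"
begin

text \<open>State of Reduce-By-Median-Counter: the set T of tracked items and the counters c
  (c j is only meaningful for j in T).\<close>
type_synonym rbm_state = "nat set \<times> (nat \<Rightarrow> real)"

definition kth_largest :: "nat \<Rightarrow> nat set \<Rightarrow> (nat \<Rightarrow> real) \<Rightarrow> real" where
  "kth_largest ks T c = rev (sorted_list_of_multiset (image_mset c (mset_set T))) ! (ks - 1)"

definition decrement_counters :: "nat \<Rightarrow> rbm_state \<Rightarrow> rbm_state" where
  "decrement_counters ks S =
     (let T = fst S; c = snd S; v = kth_largest ks T c; c' = (\<lambda>j. c j - v)
      in ({j \<in> T. c' j > 0}, c'))"

definition rbm_update :: "nat \<Rightarrow> nat \<Rightarrow> rbm_state \<Rightarrow> nat \<Rightarrow> real \<Rightarrow> rbm_state" where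
  "rbm_update k ks S i \<Delta> =
     (let T = fst S; c = snd S in
      if i \<in> T then (T, c(i := c i + \<Delta>))
      else if card T < k then (insert i T, c(i := \<Delta>))
      else (let v = kth_largest ks T c; S' = decrement_counters ks S in
            if \<Delta> \<ge> v then (insert i (fst S'), (snd S')(i := \<Delta> - v)) else S'))"

text \<open>State after the first n updates of the stream (item t, weight t), t = 1, 2, ...\<close>
primrec rbm_run :: "nat \<Rightarrow> nat \<Rightarrow> (nat \<Rightarrow> nat) \<Rightarrow> (nat \<Rightarrow> real) \<Rightarrow> nat \<Rightarrow> rbm_state" where
  "rbm_run k ks item w 0 = ({}, (\<lambda>_. 0))"
| "rbm_run k ks item w (Suc n) = rbm_update k ks (rbm_run k ks item w n) (item (Suc n)) (w (Suc n))"

definition rbm_estimate :: "rbm_state \<Rightarrow> nat \<Rightarrow> real" where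
  "rbm_estimate S i = (if i \<in> fst S then snd S i else 0)"

definition rbm_counter_sum :: "rbm_state \<Rightarrow> real" where
  "rbm_counter_sum S = (\<Sum>j\<in>fst S. snd S j)"

definition freq :: "(nat \<Rightarrow> nat) \<Rightarrow> (nat \<Rightarrow> real) \<Rightarrow> nat \<Rightarrow> nat \<Rightarrow> real" where
  "freq item w i n = (\<Sum>t\<in>{t\<in>{1..n}. item t = i}. w t)"

end

theory Submission
  imports Defs
begin

text \<open>An update that subtracts v from the counters (v = 0 if it does not call
  DecrementCounters) raises the error f_i - estimate(i) of every item by at most v. Meanwhile
  DecrementCounters lowers each counter c j by exactly min (c j) v, and at least ks counters
  are at least v, so the weight N - C not held in the counters grows by at least ks * v.
  Summing over the stream, the error is bounded by the total decrement D, and ks * D \<le> N - C.\<close>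

lemma length_sorted_list_of_multiset [simp]:
  "length (sorted_list_of_multiset M) = size M"
  by (metis mset_sorted_list_of_multiset size_mset)

lemma kth_largest_in_image:
  assumes "finite T" and "1 \<le> ks" and "ks \<le> card T"
  shows "kth_largest ks T c \<in> c ` T"
proof -
  define L where "L = rev (sorted_list_of_multiset (image_mset c (mset_set T)))"
  have "set L = c ` T"
    using assms(1) by (simp add: L_def)
  moreover have "ks - 1 < length L"
    using assms by (simp add: L_def size_mset_set)
  ultimately show ?thesis
    unfolding kth_largest_def L_def[symmetric] by (metis nth_mem)
qed

lemma kth_largest_card_ge:
  assumes "finite T" and "1 \<le> ks" and "ks \<le> card T"
  shows "ks \<le> card {j \<in> T. kth_largest ks T c \<le> c j}"
proof -
  define v where "v = kth_largest ks T c"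
  define L where "L = rev (sorted_list_of_multiset (image_mset c (mset_set T)))"
  have mset_L: "mset L = image_mset c (mset_set T)"
    by (simp add: L_def)
  have len_L: "ks \<le> length L"
    using assms by (simp add: L_def size_mset_set)
  have "\<forall>x \<in> set (take ks L). v \<le> x"
  proof
    fix x assume "x \<in> set (take ks L)"
    then obtain i where "i < ks" and x: "x = L ! i"
      using len_L by (auto simp: in_set_conv_nth)
    have "sorted (rev L)"
      by (simp add: L_def)
    then have "L ! (ks - 1) \<le> L ! i"
      using \<open>i < ks\<close> len_L by (intro sorted_rev_nth_mono) auto
    then show "v \<le> x"
      by (simp add: v_def kth_largest_def L_def[symmetric] x)
  qed
  then have "ks = length (filter (\<lambda>x. v \<le> x) (take ks L))"
    using len_L by simp
  also have "\<dots> \<le> length (filter (\<lambda>x. v \<le> x) L)"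
    by (metis append_take_drop_id filter_append length_append le_add1)
  also have "\<dots> = size (filter_mset (\<lambda>x. v \<le> x) (image_mset c (mset_set T)))"
    by (metis mset_L mset_filter size_mset)
  also have "\<dots> = card {j \<in> T. v \<le> c j}"
    using assms(1) by (simp add: filter_mset_image_mset)
  finally show ?thesis
    by (simp add: v_def)
qed

lemma card_mult_le_sum_min:
  fixes c :: "'a \<Rightarrow> real"
  assumes "finite T" and "0 \<le> v" and "\<forall>j \<in> T. 0 \<le> c j"
  shows "real (card {j \<in> T. v \<le> c j}) * v \<le> (\<Sum>j \<in> T. min (c j) v)"
proof -
  have "real (card {j \<in> T. v \<le> c j}) * v = (\<Sum>j \<in> {j \<in> T. v \<le> c j}. min (c j) v)"
    by simp
  also have "\<dots> \<le> (\<Sum>j \<in> T. min (c j) v)"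
    using assms by (intro sum_mono2) auto
  finally show ?thesis .
qed

lemma sum_minus_sum_excess:
  fixes c :: "'a \<Rightarrow> real"
  assumes "finite T"
  shows "(\<Sum>j \<in> T. c j) - (\<Sum>j \<in> {j \<in> T. c j - v > 0}. c j - v) = (\<Sum>j \<in> T. min (c j) v)"
proof -
  let ?P = "{j \<in> T. c j - v > 0}"
  have "(\<Sum>j \<in> T. c j) = (\<Sum>j \<in> ?P. c j) + (\<Sum>j \<in> T - ?P. c j)"
    and "(\<Sum>j \<in> T. min (c j) v) = (\<Sum>j \<in> ?P. min (c j) v) + (\<Sum>j \<in> T - ?P. min (c j) v)"
    using assms by (metis (no_types, lifting) add.commute mem_Collect_eq subsetI sum.subset_diff)+
  moreover have "(\<Sum>j \<in> ?P. min (c j) v) = (\<Sum>j \<in> ?P. v)"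
    and "(\<Sum>j \<in> T - ?P. min (c j) v) = (\<Sum>j \<in> T - ?P. c j)"
    by (auto intro: sum.cong)
  ultimately show ?thesis
    by (simp add: sum_subtractf)
qed

lemma kth_largest_nonneg:
  assumes "finite T" and "1 \<le> ks" and "ks \<le> card T" and "\<forall>j \<in> T. 0 \<le> c j"
  shows "0 \<le> kth_largest ks T c"
  using kth_largest_in_image[OF assms(1-3), of c] assms(4) by auto

lemma kth_largest_mult_le_sum_min:
  assumes "finite T" and "1 \<le> ks" and "ks \<le> card T" and "\<forall>j \<in> T. 0 \<le> c j"
  shows "real ks * kth_largest ks T c \<le> (\<Sum>j \<in> T. min (c j) (kth_largest ks T c))"
proof -
  have "real ks * kth_largest ks T c
          \<le> real (card {j \<in> T. kth_largest ks T c \<le> c j}) * kth_largest ks T c"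
    using kth_largest_card_ge[OF assms(1-3)] kth_largest_nonneg[OF assms]
    by (intro mult_right_mono) auto
  also have "\<dots> \<le> (\<Sum>j \<in> T. min (c j) (kth_largest ks T c))"
    using kth_largest_nonneg[OF assms] assms by (intro card_mult_le_sum_min)
  finally show ?thesis .
qed

lemma card_above_kth_largest_less:
  assumes "finite T" and "1 \<le> ks" and "ks \<le> card T"
  shows "card {j \<in> T. 0 < c j - kth_largest ks T c} < card T"
proof -
  obtain j where "j \<in> T" and "c j = kth_largest ks T c"
    using kth_largest_in_image[OF assms, of c] by auto
  then have "{j \<in> T. 0 < c j - kth_largest ks T c} \<subset> T"
    by force
  then show ?thesis
    using assms(1) by (rule psubset_card_mono[rotated])
qed

definition rbm_wf :: "nat \<Rightarrow> rbm_state \<Rightarrow> bool" where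
  "rbm_wf k S \<longleftrightarrow> finite (fst S) \<and> card (fst S) \<le> k \<and> (\<forall>j \<in> fst S. 0 \<le> snd S j)"

definition rbm_decrement :: "nat \<Rightarrow> nat \<Rightarrow> rbm_state \<Rightarrow> nat \<Rightarrow> real" where
  "rbm_decrement k ks S i =
     (if i \<notin> fst S \<and> k \<le> card (fst S) then kth_largest ks (fst S) (snd S) else 0)"

lemma rbm_update_decrement:
  fixes ks :: nat and c :: "nat \<Rightarrow> real"
  assumes "i \<notin> T" and "k \<le> card T"
  defines "v \<equiv> kth_largest ks T c"
  shows "rbm_update k ks (T, c) i \<Delta> =
    (if v \<le> \<Delta> then (insert i {j \<in> T. 0 < c j - v}, (\<lambda>j. c j - v)(i := \<Delta> - v))
     else ({j \<in> T. 0 < c j - v}, \<lambda>j. c j - v))"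
  using assms by (simp add: rbm_update_def decrement_counters_def Let_def)

context
  fixes k ks :: nat and T :: "nat set" and c :: "nat \<Rightarrow> real"
  assumes wf: "rbm_wf k (T, c)" and ks_pos: "1 \<le> ks" and ks_le_k: "ks \<le> k"
begin

private lemma finite_tracked: "finite T"
  using wf by (simp add: rbm_wf_def)

private lemma counters_nonneg: "\<forall>j \<in> T. 0 \<le> c j"
  using wf by (simp add: rbm_wf_def)

lemma rbm_wf_update:
  assumes "0 \<le> \<Delta>"
  shows "rbm_wf k (rbm_update k ks (T, c) i \<Delta>)"
proof (cases "i \<notin> T \<and> k \<le> card T")
  case True
  then have ks_card: "ks \<le> card T"
    using ks_le_k by simp
  have "card {j \<in> T. 0 < c j - kth_largest ks T c} < k"
    using card_above_kth_largest_less[OF finite_tracked ks_pos ks_card, of c] wf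
    by (simp add: rbm_wf_def)
  then show ?thesis
    using True finite_tracked kth_largest_nonneg[OF finite_tracked ks_pos ks_card counters_nonneg]
    by (auto simp: rbm_update_decrement rbm_wf_def card_insert_if)
next
  case False
  then show ?thesis
    using wf assms by (auto simp: rbm_update_def rbm_wf_def card_insert_if)
qed

lemma rbm_estimate_update:
  "rbm_estimate (T, c) x + (if x = i then \<Delta> else 0)
     \<le> rbm_estimate (rbm_update k ks (T, c) i \<Delta>) x + rbm_decrement k ks (T, c) i"
proof (cases "i \<notin> T \<and> k \<le> card T")
  case True
  then have "ks \<le> card T"
    using ks_le_k by simp
  then have "0 \<le> kth_largest ks T c"
    by (rule kth_largest_nonneg[OF finite_tracked ks_pos _ counters_nonneg])
  with True show ?thesis
    by (auto simp: rbm_update_decrement rbm_decrement_def rbm_estimate_def)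
next
  case False
  then show ?thesis
    by (auto simp: rbm_update_def rbm_decrement_def rbm_estimate_def)
qed

lemma rbm_counter_sum_update:
  assumes "0 \<le> \<Delta>"
  shows "rbm_counter_sum (rbm_update k ks (T, c) i \<Delta>) + real ks * rbm_decrement k ks (T, c) i
           \<le> rbm_counter_sum (T, c) + \<Delta>"
proof (cases "i \<notin> T \<and> k \<le> card T")
  case True
  then have ks_card: "ks \<le> card T"
    using ks_le_k by simp
  let ?v = "kth_largest ks T c" and ?P = "{j \<in> T. 0 < c j - kth_largest ks T c}"
  have "finite ?P" and "i \<notin> ?P"
    using finite_tracked True by auto
  then have "rbm_counter_sum (rbm_update k ks (T, c) i \<Delta>)
               = (\<Sum>j \<in> ?P. c j - ?v) + (if ?v \<le> \<Delta> then \<Delta> - ?v else 0)"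
    using True by (auto simp: rbm_update_decrement rbm_counter_sum_def intro!: sum.cong)
  also have "(\<Sum>j \<in> ?P. c j - ?v) = (\<Sum>j \<in> T. c j) - (\<Sum>j \<in> T. min (c j) ?v)"
    using sum_minus_sum_excess[OF finite_tracked, of c ?v] by simp
  finally show ?thesis
    using True assms kth_largest_nonneg[OF finite_tracked ks_pos ks_card counters_nonneg]
      kth_largest_mult_le_sum_min[OF finite_tracked ks_pos ks_card counters_nonneg]
    by (auto simp: rbm_decrement_def rbm_counter_sum_def)
next
  case False
  have "(\<Sum>j \<in> T. (c(i := d)) j) = (\<Sum>j \<in> T. c j)" if "i \<notin> T" for d
    using that by (intro sum.cong) auto
  with False show ?thesis
    using finite_tracked
    by (auto simp: rbm_update_def rbm_decrement_def rbm_counter_sum_def sum.remove)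
qed

end

definition rbm_total_decrement :: "nat \<Rightarrow> nat \<Rightarrow> (nat \<Rightarrow> nat) \<Rightarrow> (nat \<Rightarrow> real) \<Rightarrow> nat \<Rightarrow> real" where
  "rbm_total_decrement k ks item w n =
     (\<Sum>t < n. rbm_decrement k ks (rbm_run k ks item w t) (item (Suc t)))"

lemma freq_Suc:
  "freq item w x (Suc n) = freq item w x n + (if x = item (Suc n) then w (Suc n) else 0)"
proof -
  have "{t \<in> {1..Suc n}. item t = x} =
          (if item (Suc n) = x then insert (Suc n) {t \<in> {1..n}. item t = x}
           else {t \<in> {1..n}. item t = x})"
    by (auto simp: le_Suc_eq)
  then show ?thesis
    by (simp add: freq_def)
qed

context
  fixes k ks :: nat and item :: "nat \<Rightarrow> nat" and w :: "nat \<Rightarrow> real"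
  assumes ks_pos: "1 \<le> ks" and ks_le_k: "ks \<le> k" and w_nonneg: "\<And>t. 1 \<le> t \<Longrightarrow> 0 \<le> w t"
begin

lemma rbm_wf_run: "rbm_wf k (rbm_run k ks item w n)"
proof (induction n)
  case 0
  show ?case
    by (simp add: rbm_wf_def)
next
  case (Suc n)
  obtain T c where "rbm_run k ks item w n = (T, c)"
    by fastforce
  with Suc.IH show ?case
    using rbm_wf_update[OF _ ks_pos ks_le_k w_nonneg] by simp
qed

lemma rbm_error_le_total_decrement:
  "freq item w x n - rbm_estimate (rbm_run k ks item w n) x \<le> rbm_total_decrement k ks item w n"
proof (induction n)
  case 0
  show ?case
    by (simp add: freq_def rbm_estimate_def rbm_total_decrement_def)
next
  case (Suc n)
  obtain T c where run: "rbm_run k ks item w n = (T, c)"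
    by fastforce
  have "rbm_estimate (T, c) x + (if x = item (Suc n) then w (Suc n) else 0)
          \<le> rbm_estimate (rbm_run k ks item w (Suc n)) x + rbm_decrement k ks (T, c) (item (Suc n))"
    using rbm_estimate_update[OF rbm_wf_run[of n, unfolded run] ks_pos ks_le_k] run by simp
  with Suc.IH run show ?case
    by (simp add: freq_Suc rbm_total_decrement_def)
qed

lemma rbm_total_decrement_bound:
  "real ks * rbm_total_decrement k ks item w n + rbm_counter_sum (rbm_run k ks item w n)
     \<le> (\<Sum>t = 1..n. w t)"
proof (induction n)
  case 0
  show ?case
    by (simp add: rbm_total_decrement_def rbm_counter_sum_def)
next
  case (Suc n)
  obtain T c where run: "rbm_run k ks item w n = (T, c)"
    by fastforce
  have "rbm_counter_sum (rbm_run k ks item w (Suc n))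
          + real ks * rbm_decrement k ks (T, c) (item (Suc n))
          \<le> rbm_counter_sum (T, c) + w (Suc n)"
    using rbm_counter_sum_update[OF rbm_wf_run[of n, unfolded run] ks_pos ks_le_k w_nonneg] run
    by simp
  with Suc.IH run show ?case
    by (simp add: rbm_total_decrement_def distrib_left)
qed

end

theorem lemma6:
  fixes k ks m :: nat and item :: "nat \<Rightarrow> nat" and w :: "nat \<Rightarrow> real"
  assumes "1 \<le> k" and "1 \<le> ks" and "ks \<le> k" and "1 \<le> m"
    and "\<And>t. t \<ge> 1 \<Longrightarrow> item t \<in> {1..m}"
    and "\<And>t. t \<ge> 1 \<Longrightarrow> w t > 0"
  shows "Max ((\<lambda>i. freq item w i n - rbm_estimate (rbm_run k ks item w n) i) ` {1..m})
           \<le> ((\<Sum>t = 1..n. w t) - rbm_counter_sum (rbm_run k ks item w n)) / real ks"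
proof -
  let ?D = "rbm_total_decrement k ks item w n"
  have w_nonneg: "\<And>t. 1 \<le> t \<Longrightarrow> 0 \<le> w t"
    using assms(6) by (simp add: less_imp_le)
  have "Max ((\<lambda>i. freq item w i n - rbm_estimate (rbm_run k ks item w n) i) ` {1..m}) \<le> ?D"
    using rbm_error_le_total_decrement[of ks k w item, OF assms(2,3) w_nonneg] assms(4)
    by (subst Max_le_iff) auto
  also have "?D \<le> ((\<Sum>t = 1..n. w t) - rbm_counter_sum (rbm_run k ks item w n)) / real ks"
    using rbm_total_decrement_bound[of ks k w item n, OF assms(2,3) w_nonneg] assms(2)
    by (simp add: pos_le_divide_eq mult.commute)
  finally show ?thesis .
qed

end
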